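(* Let $n\ge 2$. For a partition $\lambda$ of $n$, let $u_\lambda$ be the number of unrooted binary trees with leaf set $[n]$ fixed by the relabeling action of a permutation $\sigma\in\mathfrak{S}_n$ of cycle type $\lambda$ (equivalently, $u_\lambda$ is the coefficient of $p_\lambda/z_\lambda$ in $Z_U=h_3[Z_R]+p_1Z_R+Z_R-Z_R^2-p_1$), let $\lambda^2$ be the cycle type of $\sigma^2$, and let $z_\lambda=\prod_{i\ge1}i^{m_i}m_i!$ where $m_i$ is the number of parts of $\lambda$ equal to $i$. Then the number of unlabeled unrooted tanglegrams with $n$ leaves is $\sum_{\lambda\vdash n} u_\lambda^2/z_\lambda$, and the number of unlabeled unrooted unordered tanglegrams with $n$ leaves is \[ \frac12\sum_{\lambda\vdash n}\frac{u_\lambda^2}{z_\lambda}+\frac12\sum_{\lambda\vdash n}\frac{u_{\lambda^2}}{z_\lambda}. \]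
   Context: An unrooted binary tree with leaf set $A$ is a tree in which every vertex has degree one or three, whose leaves (degree-one vertices) are labeled bijectively by $A$ and whose degree-three vertices are unlabeled; the one-vertex tree is excluded; trees are considered up to label-preserving isomorphism. A (rooted) binary tree with leaf set $A$ is a rooted tree in which every vertex has zero or two unordered children, with leaves labeled bijectively by $A$ and internal vertices unlabeled (the single labeled vertex counts). $\mathfrak{S}_n$ acts on trees with leaf set $[n]$ by relabeling leaves. An unrooted tanglegram with leaf set $[n]$ is an ordered pair of unrooted binary trees with leaf set $[n]$; an unrooted unordered tanglegram is an unordered pair (multiset of size two) of such trees. $\mathfrak{S}_n$ acts on both by relabeling the two trees simultaneously, and the unlabeled objects with $n$ leaves are the orbits. Cycle index of a species $F$: $Z_F=\sum_{n\ge0}\frac1{n!}\sum_{\sigma\in\mathfrak{S}_n}\mathrm{fix}\,F[\sigma]\,p_\sigma$ with $p_\sigma=\prod_i p_i^{\sigma_i}$, $\sigma_i$ the number of $i$-cycles; $Z_R$, $Z_U$ are the cycle indices of rooted and unrooted binary trees; $h_3=\tfrac16(p_1^3+3p_1p_2+2p_3)$; plethysm $f[g]$ replaces each $p_i$ in $f$ by $g(p_i,p_{2i},\dots)$. *)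

theory Defs
  imports Complex_Main "HOL-Combinatorics.Permutations" "HOL-Library.Multiset"
begin

text \<open>Leaf labelled i (for i in {1..n}) is the vertex named i; internal vertices are
  vertices with names outside {1..n} (unlabelled: only relevant up to isomorphism).\<close>

type_synonym graph = "nat set \<times> nat set set"

definition deg :: "graph \<Rightarrow> nat \<Rightarrow> nat" where
  "deg G v = card {e \<in> snd G. v \<in> e}"

definition connected_graph :: "graph \<Rightarrow> bool" where
  "connected_graph G = (\<forall>u\<in>fst G. \<forall>v\<in>fst G. (u, v) \<in> {(x, y). {x, y} \<in> snd G}\<^sup>*)"

definition is_ubtree :: "nat \<Rightarrow> graph \<Rightarrow> bool" where
  "is_ubtree n G \<longleftrightarrow>
     finite (fst G) \<and> card (fst G) \<ge> 2 \<and>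
     snd G \<subseteq> {e. \<exists>u v. e = {u, v} \<and> u \<noteq> v \<and> u \<in> fst G \<and> v \<in> fst G} \<and>
     connected_graph G \<and> card (snd G) + 1 = card (fst G) \<and>
     {1..n} \<subseteq> fst G \<and>
     (\<forall>v\<in>fst G. (v \<in> {1..n} \<longrightarrow> deg G v = 1) \<and> (v \<notin> {1..n} \<longrightarrow> deg G v = 3))"

definition ubtrees :: "nat \<Rightarrow> graph set" where
  "ubtrees n = {G. is_ubtree n G}"

definition leaf_iso :: "nat \<Rightarrow> graph \<Rightarrow> graph \<Rightarrow> bool" where
  "leaf_iso n G H \<longleftrightarrow> (\<exists>f. bij_betw f (fst G) (fst H) \<and> (\<forall>i\<in>{1..n}. f i = i) \<and>
       snd H = (\<lambda>e. f ` e) ` snd G)"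

definition iso_rel :: "nat \<Rightarrow> (graph \<times> graph) set" where
  "iso_rel n = {(G, H). G \<in> ubtrees n \<and> H \<in> ubtrees n \<and> leaf_iso n G H}"

definition UT :: "nat \<Rightarrow> graph set set" where
  "UT n = ubtrees n // iso_rel n"

text \<open>Relabelling by a permutation sigma of {1..n} (sigma permutes {1..n}, so it is the
  identity on internal vertex names).\<close>
definition relabel :: "(nat \<Rightarrow> nat) \<Rightarrow> graph \<Rightarrow> graph" where
  "relabel \<sigma> G = (\<sigma> ` fst G, (\<lambda>e. \<sigma> ` e) ` snd G)"

definition fix_count :: "nat \<Rightarrow> (nat \<Rightarrow> nat) \<Rightarrow> nat" where
  "fix_count n \<sigma> = card {C \<in> UT n. \<forall>G\<in>C. relabel \<sigma> G \<in> C}"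

definition perm_orbit :: "(nat \<Rightarrow> nat) \<Rightarrow> nat \<Rightarrow> nat set" where
  "perm_orbit \<sigma> x = {(\<sigma> ^^ k) x | k. True}"

definition cycle_type :: "nat \<Rightarrow> (nat \<Rightarrow> nat) \<Rightarrow> nat multiset" where
  "cycle_type n \<sigma> = image_mset card (mset_set (perm_orbit \<sigma> ` {1..n}))"

definition partitions :: "nat \<Rightarrow> nat multiset set" where
  "partitions n = {lam. (\<forall>i\<in>#lam. i > 0) \<and> sum_mset lam = n}"

definition perm_of_type :: "nat \<Rightarrow> nat multiset \<Rightarrow> (nat \<Rightarrow> nat)" where
  "perm_of_type n lam = (SOME \<sigma>. \<sigma> permutes {1..n} \<and> cycle_type n \<sigma> = lam)"

definition u_num :: "nat \<Rightarrow> nat multiset \<Rightarrow> nat" where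
  "u_num n lam = fix_count n (perm_of_type n lam)"

definition sq_type :: "nat \<Rightarrow> nat multiset \<Rightarrow> nat multiset" where
  "sq_type n lam = cycle_type n (perm_of_type n lam \<circ> perm_of_type n lam)"

definition z_num :: "nat multiset \<Rightarrow> nat" where
  "z_num lam = (\<Prod>i\<in>set_mset lam. i ^ count lam i * fact (count lam i))"

definition tangle_rel :: "nat \<Rightarrow> ((graph \<times> graph) \<times> (graph \<times> graph)) set" where
  "tangle_rel n = {((G1, G2), (H1, H2)). G1 \<in> ubtrees n \<and> G2 \<in> ubtrees n \<and>
      H1 \<in> ubtrees n \<and> H2 \<in> ubtrees n \<and>
      (\<exists>\<sigma>. \<sigma> permutes {1..n} \<and> leaf_iso n (relabel \<sigma> G1) H1 \<and> leaf_iso n (relabel \<sigma> G2) H2)}"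

definition unordered_tangle_rel :: "nat \<Rightarrow> ((graph \<times> graph) \<times> (graph \<times> graph)) set" where
  "unordered_tangle_rel n = {((G1, G2), (H1, H2)). G1 \<in> ubtrees n \<and> G2 \<in> ubtrees n \<and>
      H1 \<in> ubtrees n \<and> H2 \<in> ubtrees n \<and>
      (\<exists>\<sigma>. \<sigma> permutes {1..n} \<and>
        ((leaf_iso n (relabel \<sigma> G1) H1 \<and> leaf_iso n (relabel \<sigma> G2) H2) \<or>
         (leaf_iso n (relabel \<sigma> G1) H2 \<and> leaf_iso n (relabel \<sigma> G2) H1)))}"

definition num_tanglegrams :: "nat \<Rightarrow> nat" where
  "num_tanglegrams n = card ((ubtrees n \<times> ubtrees n) // tangle_rel n)"

definition num_unordered_tanglegrams :: "nat \<Rightarrow> nat" where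
  "num_unordered_tanglegrams n = card ((ubtrees n \<times> ubtrees n) // unordered_tangle_rel n)"

end

theory Submission
  imports Defs "HOL-Combinatorics.Cycles" "HOL-Algebra.Group_Action" "HOL-Algebra.Sym_Groups"
begin

text \<open>
  Unlabelled tanglegrams are the orbits of \<open>\<fS>\<^sub>n\<close> acting diagonally on pairs of leaf-labelled
  trees taken up to leaf-preserving isomorphism; unordered ones are the orbits of
  \<open>\<fS>\<^sub>n \<times> \<int>/2\<close>, whose second factor swaps the two trees. By Burnside's lemma an orbit count
  is the average number of fixed points. If \<open>\<sigma>\<close> fixes \<open>u(\<sigma>)\<close> trees, it fixes \<open>u(\<sigma>)\<^sup>2\<close>
  ordered pairs, while \<open>\<sigma>\<close> followed by the swap fixes exactly the pairs \<open>(C, \<sigma> C)\<close> with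
  \<open>\<sigma>\<^sup>2 C = C\<close>, i.e. \<open>u(\<sigma>\<^sup>2)\<close> of them. Conjugate permutations fix equally many trees, so
  \<open>u(\<sigma>)\<close> only depends on the cycle type of \<open>\<sigma>\<close>, and grouping the Burnside sums by cycle
  type (\<open>n!/z\<^sub>\<lambda>\<close> permutations have type \<open>\<lambda>\<close>) gives both formulas.
\<close>

section \<open>Cycle types of permutations\<close>

definition cycle_type_on :: "nat set \<Rightarrow> (nat \<Rightarrow> nat) \<Rightarrow> nat multiset" where
  "cycle_type_on A \<sigma> = image_mset card (mset_set (perm_orbit \<sigma> ` A))"

lemma cycle_type_eq_cycle_type_on: "cycle_type n \<sigma> = cycle_type_on {1..n} \<sigma>"
  by (simp add: cycle_type_def cycle_type_on_def)

lemma cycle_type_on_empty [simp]: "cycle_type_on {} \<sigma> = {#}"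
  by (simp add: cycle_type_on_def)

lemma self_in_perm_orbit: "x \<in> perm_orbit \<sigma> x"
  unfolding perm_orbit_def by (auto intro: exI[of _ 0])

lemma funpow_in_perm_orbit: "(\<sigma> ^^ k) x \<in> perm_orbit \<sigma> x"
  unfolding perm_orbit_def by auto

lemma perm_orbit_eq_set_support:
  assumes "permutation \<sigma>"
  shows "perm_orbit \<sigma> a = set (support \<sigma> a)"
  unfolding support_set[OF assms] perm_orbit_def by auto

lemma card_perm_orbit:
  assumes "permutation \<sigma>"
  shows "card (perm_orbit \<sigma> a) = least_power \<sigma> a"
  using distinct_card[OF cycle_of_permutation[OF assms]] perm_orbit_eq_set_support[OF assms] by simp

lemma finite_perm_orbit: "permutation \<sigma> \<Longrightarrow> finite (perm_orbit \<sigma> a)"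
  by (simp add: perm_orbit_eq_set_support)

lemma card_perm_orbit_pos: "permutation \<sigma> \<Longrightarrow> card (perm_orbit \<sigma> a) > 0"
  by (simp add: card_perm_orbit least_power_of_permutation(2))

lemma perm_orbit_eq:
  assumes "permutation \<sigma>" "y \<in> perm_orbit \<sigma> x"
  shows "perm_orbit \<sigma> y = perm_orbit \<sigma> x"
proof -
  have "y \<in> set (support \<sigma> y) \<inter> set (support \<sigma> x)"
    using assms(2) self_in_perm_orbit[of y \<sigma>] unfolding perm_orbit_eq_set_support[OF assms(1)] by blast
  hence "set (support \<sigma> y) = set (support \<sigma> x)"
    using disjoint_support[OF assms(1)] unfolding disjoint_def by blast
  thus ?thesis unfolding perm_orbit_eq_set_support[OF assms(1)] .
qed

lemma perm_orbit_subset: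
  assumes "\<sigma> permutes A" "x \<in> A"
  shows "perm_orbit \<sigma> x \<subseteq> A"
  unfolding perm_orbit_def using permutes_in_image[OF permutes_funpow[OF assms(1)]] assms(2) by auto

lemma image_perm_orbit:
  assumes "permutation \<sigma>"
  shows "\<sigma> ` perm_orbit \<sigma> x = perm_orbit \<sigma> x"
proof (rule card_subset_eq[OF finite_perm_orbit[OF assms]])
  show "\<sigma> ` perm_orbit \<sigma> x \<subseteq> perm_orbit \<sigma> x"
    unfolding perm_orbit_def by (auto intro: exI[of _ "Suc k" for k])
  show "card (\<sigma> ` perm_orbit \<sigma> x) = card (perm_orbit \<sigma> x)"
    using inj_on_subset[OF bij_is_inj[OF permutation_bijective[OF assms]]] by (simp add: card_image)
qed

lemma funpow_mod_least_power:
  assumes "permutation \<sigma>"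
  shows "(\<sigma> ^^ (i mod least_power \<sigma> a)) a = (\<sigma> ^^ i) a"
proof -
  let ?L = "least_power \<sigma> a"
  have "(\<sigma> ^^ i) a = (\<sigma> ^^ (i mod ?L + ?L * (i div ?L))) a" by simp
  also have "\<dots> = (\<sigma> ^^ (i mod ?L)) ((\<sigma> ^^ (?L * (i div ?L))) a)" by (simp only: funpow_add comp_apply)
  also have "(\<sigma> ^^ (?L * (i div ?L))) a = a" using least_power_dvd[OF assms, of a "?L * (i div ?L)"] by simp
  finally show ?thesis by simp
qed

lemma funpow_eq_iff_mod_least_power:
  assumes "permutation \<sigma>"
  shows "(\<sigma> ^^ i) a = (\<sigma> ^^ j) a \<longleftrightarrow> i mod least_power \<sigma> a = j mod least_power \<sigma> a"
proof
  let ?L = "least_power \<sigma> a"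
  have L: "?L > 0" using least_power_of_permutation(2)[OF assms] .
  have inj: "inj_on (\<lambda>k. (\<sigma> ^^ k) a) {0..<?L}"
    using cycle_of_permutation[OF assms] by (simp add: distinct_map)
  assume "(\<sigma> ^^ i) a = (\<sigma> ^^ j) a"
  hence "(\<sigma> ^^ (i mod ?L)) a = (\<sigma> ^^ (j mod ?L)) a"
    by (simp only: funpow_mod_least_power[OF assms])
  thus "i mod ?L = j mod ?L" using inj_onD[OF inj] L by simp
qed (metis funpow_mod_least_power[OF assms])

definition remove_cycle :: "(nat \<Rightarrow> nat) \<Rightarrow> nat \<Rightarrow> nat \<Rightarrow> nat" where
  "remove_cycle \<sigma> a x = (if x \<in> perm_orbit \<sigma> a then x else \<sigma> x)"

lemma funpow_notin_perm_orbit: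
  assumes "permutation \<sigma>" "x \<notin> perm_orbit \<sigma> a"
  shows "(\<sigma> ^^ k) x \<notin> perm_orbit \<sigma> a"
  using perm_orbit_eq[OF assms(1)] funpow_in_perm_orbit self_in_perm_orbit assms(2) by metis

lemma permutes_remove_cycle:
  assumes "\<sigma> permutes A" "finite A"
  shows "remove_cycle \<sigma> a permutes (A - perm_orbit \<sigma> a)"
proof (rule bij_imp_permutes)
  let ?O = "perm_orbit \<sigma> a"
  have "\<sigma> ` (A - ?O) = A - ?O"
    using image_set_diff[OF permutes_inj[OF assms(1)]] permutes_image[OF assms(1)]
      image_perm_orbit[OF permutes_imp_permutation[OF assms(2,1)]] by simp
  hence "bij_betw \<sigma> (A - ?O) (A - ?O)"
    using bij_betw_subset[OF permutes_imp_bij[OF assms(1)]] by blast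
  thus "bij_betw (remove_cycle \<sigma> a) (A - ?O) (A - ?O)"
    by (rule iffD1[OF bij_betw_cong, rotated]) (simp add: remove_cycle_def)
next
  fix x assume "x \<notin> A - perm_orbit \<sigma> a"
  thus "remove_cycle \<sigma> a x = x" using permutes_not_in[OF assms(1)] by (auto simp: remove_cycle_def)
qed

lemma funpow_remove_cycle:
  assumes "permutation \<sigma>" "x \<notin> perm_orbit \<sigma> a"
  shows "(remove_cycle \<sigma> a ^^ k) x = (\<sigma> ^^ k) x"
  by (induct k) (simp_all add: remove_cycle_def funpow_notin_perm_orbit[OF assms])

lemma perm_orbit_remove_cycle:
  assumes "permutation \<sigma>" "x \<notin> perm_orbit \<sigma> a"
  shows "perm_orbit (remove_cycle \<sigma> a) x = perm_orbit \<sigma> x"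
  unfolding perm_orbit_def using funpow_remove_cycle[OF assms] by simp

lemma cycle_type_on_remove_cycle:
  assumes "\<sigma> permutes A" "finite A" "a \<in> A"
  shows "cycle_type_on A \<sigma> =
    add_mset (card (perm_orbit \<sigma> a)) (cycle_type_on (A - perm_orbit \<sigma> a) (remove_cycle \<sigma> a))"
proof -
  let ?O = "perm_orbit \<sigma> a"
  let ?S = "perm_orbit (remove_cycle \<sigma> a) ` (A - ?O)"
  have p: "permutation \<sigma>" using permutes_imp_permutation[OF assms(2,1)] .
  have S: "?S = perm_orbit \<sigma> ` (A - ?O)"
    using perm_orbit_remove_cycle[OF p] by (intro image_cong) auto
  have "perm_orbit \<sigma> ` A = insert ?O ?S"
    unfolding S using perm_orbit_eq[OF p] assms(3) by blast
  moreover have "?O \<notin> ?S"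
    unfolding S using self_in_perm_orbit by blast
  ultimately have "mset_set (perm_orbit \<sigma> ` A) = add_mset ?O (mset_set ?S)"
    using assms(2) by simp
  thus ?thesis unfolding cycle_type_on_def by simp
qed

lemma card_remove_orbit_less:
  assumes "finite A" "a \<in> A"
  shows "card (A - perm_orbit \<sigma> a) < card A"
proof -
  have "A - perm_orbit \<sigma> a \<subset> A" using assms(2) self_in_perm_orbit by blast
  thus ?thesis by (rule psubset_card_mono[OF assms(1)])
qed

lemma cycle_type_on_in_partitions:
  assumes "\<sigma> permutes A" "finite A"
  shows "cycle_type_on A \<sigma> \<in> partitions (card A)"
  unfolding partitions_def using assms
proof (induction "card A" arbitrary: A \<sigma> rule: less_induct)
  case less
  show ?case
  proof (cases "A = {}")
    case False
    then obtain a where a: "a \<in> A" by auto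
    let ?O = "perm_orbit \<sigma> a"
    have "card (A - ?O) = card A - card ?O"
      using card_Diff_subset[OF finite_subset[OF _ less.prems(2)]] perm_orbit_subset[OF less.prems(1) a] by blast
    moreover have "card ?O \<le> card A"
      using card_mono[OF less.prems(2) perm_orbit_subset[OF less.prems(1) a]] .
    moreover have "card ?O > 0"
      using card_perm_orbit_pos[OF permutes_imp_permutation[OF less.prems(2,1)]] .
    moreover note less.hyps[OF card_remove_orbit_less[OF less.prems(2) a]
        permutes_remove_cycle[OF less.prems] finite_Diff[OF less.prems(2)]]
    ultimately show ?thesis unfolding cycle_type_on_remove_cycle[OF less.prems a] partitions_def by auto
  qed (simp add: partitions_def)
qed

lemma intertwining_bij_betw_perm_orbits:
  assumes \<sigma>: "permutation \<sigma>" and \<tau>: "permutation \<tau>"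
    and card_eq: "card (perm_orbit \<sigma> a) = card (perm_orbit \<tau> b)"
  obtains \<pi> where "bij_betw \<pi> (perm_orbit \<sigma> a) (perm_orbit \<tau> b)"
    and "\<forall>x\<in>perm_orbit \<sigma> a. \<pi> (\<sigma> x) = \<tau> (\<pi> x)"
proof -
  define \<pi> where "\<pi> x = (\<tau> ^^ (SOME i. x = (\<sigma> ^^ i) a)) b" for x
  have L: "least_power \<tau> b = least_power \<sigma> a"
    using card_eq card_perm_orbit[OF \<sigma>] card_perm_orbit[OF \<tau>] by simp
  have \<pi>_funpow: "\<pi> ((\<sigma> ^^ i) a) = (\<tau> ^^ i) b" for i
  proof -
    have "(\<sigma> ^^ i) a = (\<sigma> ^^ (SOME k. (\<sigma> ^^ i) a = (\<sigma> ^^ k) a)) a" by (rule someI_ex) blast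
    thus ?thesis
      unfolding \<pi>_def funpow_eq_iff_mod_least_power[OF \<sigma>] funpow_eq_iff_mod_least_power[OF \<tau>] L
      by simp
  qed
  have "inj_on \<pi> (perm_orbit \<sigma> a)"
  proof (rule inj_onI)
    fix x y assume "x \<in> perm_orbit \<sigma> a" "y \<in> perm_orbit \<sigma> a" "\<pi> x = \<pi> y"
    then obtain i k where "x = (\<sigma> ^^ i) a" "y = (\<sigma> ^^ k) a" "(\<tau> ^^ i) b = (\<tau> ^^ k) b"
      unfolding perm_orbit_def using \<pi>_funpow by auto
    thus "x = y"
      using funpow_eq_iff_mod_least_power[OF \<sigma>, of i a k] funpow_eq_iff_mod_least_power[OF \<tau>, of i b k] L
      by simp
  qed
  moreover have "\<pi> ` perm_orbit \<sigma> a = perm_orbit \<tau> b"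
    unfolding perm_orbit_def using \<pi>_funpow by (auto simp: image_iff) (metis \<pi>_funpow)
  moreover have "\<pi> (\<sigma> x) = \<tau> (\<pi> x)" if x: "x \<in> perm_orbit \<sigma> a" for x
  proof -
    obtain i where "x = (\<sigma> ^^ i) a" using x unfolding perm_orbit_def by auto
    thus ?thesis using \<pi>_funpow[of "Suc i"] \<pi>_funpow[of i] by simp
  qed
  ultimately show thesis using that unfolding bij_betw_def by blast
qed

lemma intertwining_bij_if_cycle_type_on_eq:
  assumes "\<sigma> permutes A" "\<tau> permutes B" "finite A" "finite B"
    and "cycle_type_on A \<sigma> = cycle_type_on B \<tau>"
  shows "\<exists>\<pi>. bij_betw \<pi> A B \<and> (\<forall>x\<in>A. \<pi> (\<sigma> x) = \<tau> (\<pi> x))"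
  using assms
proof (induction "card A" arbitrary: A B \<sigma> \<tau> rule: less_induct)
  case less
  note \<sigma> = less.prems(1,3) and \<tau> = less.prems(2,4)
  show ?case
  proof (cases "A = {}")
    case True
    hence "card B = 0" using less.prems(5) cycle_type_on_in_partitions[OF \<tau>] by (simp add: partitions_def)
    thus ?thesis using True less.prems(4) by auto
  next
    case False
    then obtain a where a: "a \<in> A" by auto
    let ?O = "perm_orbit \<sigma> a"
    have "card ?O \<in># cycle_type_on B \<tau>"
      using less.prems(5) cycle_type_on_remove_cycle[OF \<sigma> a] by (metis union_single_eq_member)
    then obtain b where b: "b \<in> B" "card (perm_orbit \<tau> b) = card ?O"
      unfolding cycle_type_on_def using \<tau>(2) by auto
    let ?Q = "perm_orbit \<tau> b"
    obtain \<pi>\<^sub>1 where \<pi>\<^sub>1: "bij_betw \<pi>\<^sub>1 ?O ?Q" "\<forall>x\<in>?O. \<pi>\<^sub>1 (\<sigma> x) = \<tau> (\<pi>\<^sub>1 x)"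
      using intertwining_bij_betw_perm_orbits[OF permutes_imp_permutation[OF \<sigma>(2,1)]
          permutes_imp_permutation[OF \<tau>(2,1)] b(2)[symmetric]] .
    have "cycle_type_on (A - ?O) (remove_cycle \<sigma> a) = cycle_type_on (B - ?Q) (remove_cycle \<tau> b)"
      using less.prems(5) cycle_type_on_remove_cycle[OF \<sigma> a] cycle_type_on_remove_cycle[OF \<tau> b(1)] b(2)
      by simp
    then obtain \<pi>\<^sub>2 where \<pi>\<^sub>2: "bij_betw \<pi>\<^sub>2 (A - ?O) (B - ?Q)"
      "\<forall>x\<in>A - ?O. \<pi>\<^sub>2 (remove_cycle \<sigma> a x) = remove_cycle \<tau> b (\<pi>\<^sub>2 x)"
      using less.hyps[OF card_remove_orbit_less[OF \<sigma>(2) a] permutes_remove_cycle[OF \<sigma>]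
          permutes_remove_cycle[OF \<tau>]] \<sigma>(2) \<tau>(2) by blast
    define \<pi> where "\<pi> x = (if x \<in> ?O then \<pi>\<^sub>1 x else \<pi>\<^sub>2 x)" for x
    have "bij_betw \<pi> (?O \<union> (A - ?O)) (?Q \<union> (B - ?Q))"
    proof (rule bij_betw_combine)
      show "bij_betw \<pi> ?O ?Q" using \<pi>\<^sub>1(1) by (rule iffD1[OF bij_betw_cong, rotated]) (simp add: \<pi>_def)
      show "bij_betw \<pi> (A - ?O) (B - ?Q)" using \<pi>\<^sub>2(1) by (rule iffD1[OF bij_betw_cong, rotated]) (simp add: \<pi>_def)
    qed blast
    moreover have "?O \<union> (A - ?O) = A" "?Q \<union> (B - ?Q) = B"
      using perm_orbit_subset[OF \<sigma>(1) a] perm_orbit_subset[OF \<tau>(1) b(1)] by auto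
    moreover have "\<pi> (\<sigma> x) = \<tau> (\<pi> x)" if x: "x \<in> A" for x
    proof (cases "x \<in> ?O")
      case True
      thus ?thesis
        using \<pi>\<^sub>1 image_perm_orbit[OF permutes_imp_permutation[OF \<sigma>(2,1)]] by (auto simp: \<pi>_def)
    next
      case False
      have "remove_cycle \<sigma> a x \<in> A - ?O"
        using permutes_in_image[OF permutes_remove_cycle[OF \<sigma>]] x False by blast
      hence "\<sigma> x \<in> A - ?O" using False by (simp add: remove_cycle_def)
      moreover have "\<pi>\<^sub>2 x \<in> B - ?Q" using \<pi>\<^sub>2(1) x False bij_betwE by blast
      ultimately show ?thesis using \<pi>\<^sub>2(2) x False by (simp add: \<pi>_def remove_cycle_def)
    qed
    ultimately show ?thesis by auto
  qed
qed

lemma conjugate_if_cycle_type_on_eq: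
  assumes "\<sigma> permutes A" "\<tau> permutes A" "finite A" "cycle_type_on A \<sigma> = cycle_type_on A \<tau>"
  obtains \<pi> where "\<pi> permutes A" "\<tau> \<circ> \<pi> = \<pi> \<circ> \<sigma>"
proof -
  obtain \<pi> where \<pi>: "bij_betw \<pi> A A" "\<forall>x\<in>A. \<pi> (\<sigma> x) = \<tau> (\<pi> x)"
    using intertwining_bij_if_cycle_type_on_eq[OF assms(1,2,3,3,4)] by blast
  define \<pi>' where "\<pi>' x = (if x \<in> A then \<pi> x else x)" for x
  have "\<pi>' permutes A"
    by (rule bij_imp_permutes, use \<pi>(1) in \<open>rule iffD1[OF bij_betw_cong, rotated]\<close>) (simp_all add: \<pi>'_def)
  moreover have "\<tau> \<circ> \<pi>' = \<pi>' \<circ> \<sigma>"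
  proof
    fix x show "(\<tau> \<circ> \<pi>') x = (\<pi>' \<circ> \<sigma>) x"
      using \<pi>(2) permutes_in_image[OF assms(1)] permutes_not_in[OF assms(1)] permutes_not_in[OF assms(2)]
      by (cases "x \<in> A") (simp_all add: \<pi>'_def)
  qed
  ultimately show thesis using that by blast
qed

section \<open>Counting permutations of a given cycle type\<close>

definition add_cycle :: "nat list \<Rightarrow> (nat \<Rightarrow> nat) \<Rightarrow> nat \<Rightarrow> nat" where
  "add_cycle cs \<tau> x = (if x \<in> set cs then cycle_of_list cs x else \<tau> x)"

lemma funpow_cycle_of_list_nth0:
  assumes "distinct cs" "cs \<noteq> []"
  shows "(cycle_of_list cs ^^ i) (cs ! 0) = cs ! (i mod length cs)"
proof -
  have "(cycle_of_list cs ^^ i) (cs ! 0) = map (cycle_of_list cs ^^ i) cs ! 0"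
    using assms(2) by simp
  also have "\<dots> = rotate i cs ! 0" unfolding cyclic_rotation[OF assms(1)] ..
  also have "\<dots> = cs ! (i mod length cs)" using assms(2) nth_rotate[of 0 cs i] by simp
  finally show ?thesis .
qed

context
  fixes cs :: "nat list" and A :: "nat set" and \<tau> :: "nat \<Rightarrow> nat"
  assumes distinct: "distinct cs" and nonempty: "cs \<noteq> []" and subset: "set cs \<subseteq> A"
    and finite: "finite A" and \<tau>: "\<tau> permutes (A - set cs)"
begin

lemma permutes_add_cycle: "add_cycle cs \<tau> permutes A"
proof (rule bij_imp_permutes)
  have "bij_betw (add_cycle cs \<tau>) (set cs \<union> (A - set cs)) (set cs \<union> (A - set cs))"
  proof (rule bij_betw_combine)
    show "bij_betw (add_cycle cs \<tau>) (set cs) (set cs)"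
      using permutes_imp_bij[OF cycle_permutes[of cs]]
      by (rule iffD1[OF bij_betw_cong, rotated]) (simp add: add_cycle_def)
    show "bij_betw (add_cycle cs \<tau>) (A - set cs) (A - set cs)"
      using permutes_imp_bij[OF \<tau>] by (rule iffD1[OF bij_betw_cong, rotated]) (simp add: add_cycle_def)
  qed blast
  moreover have "set cs \<union> (A - set cs) = A" using subset by auto
  ultimately show "bij_betw (add_cycle cs \<tau>) A A" by simp
next
  fix x assume "x \<notin> A"
  thus "add_cycle cs \<tau> x = x" using subset permutes_not_in[OF \<tau>] by (auto simp: add_cycle_def)
qed

lemma funpow_add_cycle_nth0: "(add_cycle cs \<tau> ^^ i) (cs ! 0) = cs ! (i mod length cs)"
proof -
  have "(add_cycle cs \<tau> ^^ i) (cs ! 0) = (cycle_of_list cs ^^ i) (cs ! 0)"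
    by (induct i) (simp_all add: add_cycle_def funpow_cycle_of_list_nth0[OF distinct nonempty] nonempty)
  thus ?thesis using funpow_cycle_of_list_nth0[OF distinct nonempty] by simp
qed

lemma least_power_add_cycle: "least_power (add_cycle cs \<tau>) (cs ! 0) = length cs"
  unfolding least_power_def
proof (rule Least_equality)
  show "(add_cycle cs \<tau> ^^ length cs) (cs ! 0) = cs ! 0 \<and> length cs > 0"
    using funpow_add_cycle_nth0 nonempty by simp
next
  fix m assume m: "(add_cycle cs \<tau> ^^ m) (cs ! 0) = cs ! 0 \<and> m > 0"
  hence "cs ! (m mod length cs) = cs ! 0" using funpow_add_cycle_nth0 by simp
  hence "m mod length cs = 0" using nth_eq_iff_index_eq[OF distinct] nonempty by simp
  thus "length cs \<le> m" using m by (metis dvd_imp_le mod_0_imp_dvd)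
qed

lemma support_add_cycle: "support (add_cycle cs \<tau>) (cs ! 0) = cs"
proof -
  have "map (\<lambda>i. cs ! (i mod length cs)) [0..<length cs] = map (\<lambda>i. cs ! i) [0..<length cs]"
    by (rule map_cong) auto
  thus ?thesis unfolding least_power_add_cycle funpow_add_cycle_nth0 by (simp add: map_nth)
qed

lemma perm_orbit_add_cycle: "perm_orbit (add_cycle cs \<tau>) (cs ! 0) = set cs"
  using perm_orbit_eq_set_support[OF permutes_imp_permutation[OF finite permutes_add_cycle], of "cs ! 0"]
  unfolding support_add_cycle .

lemma remove_cycle_add_cycle: "remove_cycle (add_cycle cs \<tau>) (cs ! 0) = \<tau>"
  using permutes_not_in[OF \<tau>] by (auto simp: remove_cycle_def perm_orbit_add_cycle add_cycle_def)

lemma cycle_type_on_add_cycle: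
  "cycle_type_on A (add_cycle cs \<tau>) = add_mset (length cs) (cycle_type_on (A - set cs) \<tau>)"
proof -
  have "cs ! 0 \<in> A" using subset nonempty by auto
  from cycle_type_on_remove_cycle[OF permutes_add_cycle finite this]
  show ?thesis
    unfolding perm_orbit_add_cycle remove_cycle_add_cycle by (simp add: distinct_card[OF distinct])
qed

end

lemma support_eq_Cons:
  assumes "permutation \<sigma>"
  shows "support \<sigma> a = a # tl (support \<sigma> a)"
  using least_power_of_permutation(2)[OF assms, of a] by (simp add: upt_conv_Cons)

lemma add_cycle_support_remove_cycle:
  assumes "permutation \<sigma>"
  shows "add_cycle (support \<sigma> a) (remove_cycle \<sigma> a) = \<sigma>"
  using cycle_restrict[OF assms] perm_orbit_eq_set_support[OF assms]
  by (auto simp: add_cycle_def remove_cycle_def)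

lemma inj_on_cycle_through_split:
  "inj_on (\<lambda>\<sigma>. (tl (support \<sigma> a), remove_cycle \<sigma> a)) {\<sigma>. permutation \<sigma>}"
proof (rule inj_onI)
  fix \<sigma> \<sigma>' assume "\<sigma> \<in> {\<sigma>. permutation \<sigma>}" "\<sigma>' \<in> {\<sigma>. permutation \<sigma>}"
    and f: "(tl (support \<sigma> a), remove_cycle \<sigma> a) = (tl (support \<sigma>' a), remove_cycle \<sigma>' a)"
  hence p: "permutation \<sigma>" "permutation \<sigma>'" by auto
  have "support \<sigma> a = support \<sigma>' a"
    using f support_eq_Cons[OF p(1), of a] support_eq_Cons[OF p(2), of a] by simp
  moreover have "remove_cycle \<sigma> a = remove_cycle \<sigma>' a" using f by simp
  ultimately show "\<sigma> = \<sigma>'"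
    using add_cycle_support_remove_cycle[OF p(1)] add_cycle_support_remove_cycle[OF p(2)] by metis
qed

definition perms_of_type :: "nat set \<Rightarrow> nat multiset \<Rightarrow> (nat \<Rightarrow> nat) set" where
  "perms_of_type A lam = {\<sigma>. \<sigma> permutes A \<and> cycle_type_on A \<sigma> = lam}"

lemma finite_perms_of_type: "finite A \<Longrightarrow> finite (perms_of_type A lam)"
  unfolding perms_of_type_def by (rule finite_subset[OF _ finite_permutations]) auto

lemma bij_betw_perms_of_type_cycle_through:
  assumes fin: "finite A" and a: "a \<in> A"
  shows "bij_betw (\<lambda>\<sigma>. (tl (support \<sigma> a), remove_cycle \<sigma> a)) (perms_of_type A lam)
     (SIGMA xs:{xs. distinct (a # xs) \<and> set xs \<subseteq> A \<and> Suc (length xs) \<in># lam}.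
        perms_of_type (A - set (a # xs)) (lam - {#Suc (length xs)#}))"
    (is "bij_betw ?f _ ?T")
proof (rule bij_betw_imageI)
  show "inj_on ?f (perms_of_type A lam)"
    using permutes_imp_permutation[OF fin]
    by (intro inj_on_subset[OF inj_on_cycle_through_split]) (auto simp: perms_of_type_def)
  show "?f ` perms_of_type A lam = ?T"
  proof (intro equalityI subsetI)
    fix y assume "y \<in> ?f ` perms_of_type A lam"
    then obtain \<sigma> where \<sigma>: "\<sigma> permutes A" "cycle_type_on A \<sigma> = lam" "y = ?f \<sigma>"
      unfolding perms_of_type_def by auto
    have p: "permutation \<sigma>" using permutes_imp_permutation[OF fin \<sigma>(1)] .
    let ?xs = "tl (support \<sigma> a)"
    have cs: "support \<sigma> a = a # ?xs" by (rule support_eq_Cons[OF p])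
    have orbit: "perm_orbit \<sigma> a = set (a # ?xs)" using perm_orbit_eq_set_support[OF p] cs by metis
    have "distinct (a # ?xs)" using cycle_of_permutation[OF p] cs by metis
    moreover have "set ?xs \<subseteq> A" using perm_orbit_subset[OF \<sigma>(1) a] orbit by simp
    moreover have "card (perm_orbit \<sigma> a) = Suc (length ?xs)"
    proof -
      have "card (perm_orbit \<sigma> a) = length (support \<sigma> a)" using card_perm_orbit[OF p] by simp
      also have "\<dots> = Suc (length ?xs)" using cs by (metis length_Cons)
      finally show ?thesis .
    qed
    moreover note cycle_type_on_remove_cycle[OF \<sigma>(1) fin a] permutes_remove_cycle[OF \<sigma>(1) fin, of a]
    ultimately show "y \<in> ?T" unfolding \<sigma>(2,3) perms_of_type_def orbit by auto
  next
    fix y assume "y \<in> ?T"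
    then obtain xs \<tau> where y: "y = (xs, \<tau>)" "distinct (a # xs)" "set xs \<subseteq> A" "Suc (length xs) \<in># lam"
        "\<tau> permutes (A - set (a # xs))" "cycle_type_on (A - set (a # xs)) \<tau> = lam - {#Suc (length xs)#}"
      unfolding perms_of_type_def by auto
    have sub: "set (a # xs) \<subseteq> A" using y(3) a by simp
    note add_cycle = permutes_add_cycle cycle_type_on_add_cycle support_add_cycle remove_cycle_add_cycle
    have "a # xs \<noteq> []" by simp
    note add_cycle = add_cycle[OF y(2) this sub fin y(5)]
    have "add_cycle (a # xs) \<tau> \<in> perms_of_type A lam"
      unfolding perms_of_type_def using add_cycle(1,2) y(4,6) by simp
    moreover have "y = ?f (add_cycle (a # xs) \<tau>)"
      using add_cycle(3,4) unfolding nth_Cons_0 by (simp only: y(1) list.sel(3))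
    ultimately show "y \<in> ?f ` perms_of_type A lam" by (rule rev_image_eqI[where f = ?f])
  qed
qed

lemma z_num_remove:
  assumes "j \<in># lam"
  shows "z_num lam = j * count lam j * z_num (lam - {#j#})"
proof -
  let ?mu = "lam - {#j#}"
  let ?F = "set_mset lam"
  let ?z = "\<lambda>M i. i ^ count M i * fact (count M i)"
  obtain c where c: "count lam j = Suc c"
    using assms by (metis count_greater_zero_iff gr0_implies_Suc)
  have z_mu: "z_num ?mu = prod (?z ?mu) ?F"
    unfolding z_num_def
    by (rule prod.mono_neutral_left) (auto simp: not_in_iff dest: in_diffD)
  have "z_num lam = ?z lam j * prod (?z lam) (?F - {j})"
    unfolding z_num_def using prod.remove[OF _ assms] by simp
  also have "prod (?z lam) (?F - {j}) = prod (?z ?mu) (?F - {j})"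
    by (rule prod.cong) auto
  also have "?z lam j = j * count lam j * ?z ?mu j"
    using c by (simp add: algebra_simps)
  finally show ?thesis
    unfolding z_mu prod.remove[OF finite_set_mset assms, of "?z ?mu"] by (simp add: algebra_simps)
qed

lemma z_num_pos: "lam \<in> partitions n \<Longrightarrow> z_num lam > 0"
  unfolding z_num_def partitions_def by (intro prod_pos) auto

lemma member_le_sum_mset:
  assumes "i \<in># (M :: nat multiset)"
  shows "i \<le> sum_mset M"
  using multi_member_split[OF assms] by auto

lemma sum_times_count_eq_sum_mset:
  assumes "finite F" "set_mset M \<subseteq> F"
  shows "(\<Sum>j\<in>F. j * count M j) = sum_mset M"
  using assms(2)
proof (induction M)
  case (add x M)
  have "(\<Sum>j\<in>F. j * count (add_mset x M) j) = (\<Sum>j\<in>F. j * count M j + (if j = x then x else 0))"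
    by (rule sum.cong) auto
  thus ?case using add assms(1) by (simp add: sum.distrib)
qed simp

lemma card_distinct_lists_times_fact:
  assumes "finite B" "k \<le> card B"
  shows "card {xs. length xs = k \<and> distinct xs \<and> set xs \<subseteq> B} * fact (card B - k) = fact (card B)"
  using card_lists_distinct_length_eq[OF assms] fact_eq_fact_times[of "card B - k" "card B"] assms(2)
  by (simp add: Suc_diff_le)

lemma finite_distinct_lists: "finite A \<Longrightarrow> finite {xs. distinct xs \<and> set xs \<subseteq> A}"
  by (rule finite_subset[OF _ finite_lists_length_le[of A "card A"]])
    (auto simp flip: distinct_card intro: card_mono)

lemma card_cycle_lists_times_fact:
  assumes "finite A" "a \<in> A" "0 < j" "j \<le> card A"
  shows "card {xs. distinct (a # xs) \<and> set xs \<subseteq> A \<and> Suc (length xs) = j} * fact (card A - j)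
    = fact (card A - 1)"
proof -
  have "{xs. distinct (a # xs) \<and> set xs \<subseteq> A \<and> Suc (length xs) = j}
      = {xs. length xs = j - 1 \<and> distinct xs \<and> set xs \<subseteq> A - {a}}"
    using assms(3) by auto
  moreover have "card (A - {a}) = card A - 1" "j - 1 \<le> card A - 1" using assms by auto
  ultimately show ?thesis using card_distinct_lists_times_fact[of "A - {a}" "j - 1"] assms by simp
qed

lemma partitions_0: "partitions 0 = {{#}}"
  unfolding partitions_def by (auto simp: multiset_eq_iff) (metis count_inI neq0_conv)

text \<open>
  Induction on \<open>|A|\<close>: the cycle through a fixed \<open>a \<in> A\<close> has some length \<open>j\<close> and can be chosen in
  \<open>(|A| - 1)! / (|A| - j)!\<close> ways, and the rest of the permutation has type \<open>\<lambda> - {j}\<close>; summing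
  \<open>j m\<^sub>j\<close> over the parts gives \<open>|A|\<close>.
\<close>

lemma card_perms_of_type:
  assumes "finite A" "lam \<in> partitions (card A)"
  shows "card (perms_of_type A lam) * z_num lam = fact (card A)"
  using assms
proof (induction "card A" arbitrary: A lam rule: less_induct)
  case less
  note fin = less.prems(1) and lam = less.prems(2)
  show ?case
  proof (cases "A = {}")
    case True
    moreover have "perms_of_type {} {#} = {id}" by (auto simp: perms_of_type_def)
    ultimately show ?thesis using lam by (simp add: partitions_0 z_num_def)
  next
    case False
    then obtain a where a: "a \<in> A" by auto
    let ?N = "card A"
    define Lx where "Lx = {xs. distinct (a # xs) \<and> set xs \<subseteq> A \<and> Suc (length xs) \<in># lam}"
    define B where "B xs = perms_of_type (A - set (a # xs)) (lam - {#Suc (length xs)#})" for xs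
    define g where "g j = j * count lam j * fact (?N - j)" for j
    have "finite Lx"
      by (rule finite_subset[OF _ finite_distinct_lists[OF fin]]) (auto simp: Lx_def)
    hence card_eq: "card (perms_of_type A lam) = (\<Sum>xs\<in>Lx. card (B xs))"
      using bij_betw_same_card[OF bij_betw_perms_of_type_cycle_through[OF fin a, of lam]]
      by (simp add: Lx_def B_def card_SigmaI finite_perms_of_type fin)
    have "card (B xs) * z_num lam = g (Suc (length xs))" if xs: "xs \<in> Lx" for xs
    proof -
      let ?j = "Suc (length xs)" and ?A' = "A - set (a # xs)"
      have xs': "distinct (a # xs)" "set (a # xs) \<subseteq> A" "?j \<in># lam" using xs a unfolding Lx_def by auto
      have card_A': "card ?A' = ?N - ?j"
        using card_Diff_subset[OF _ xs'(2)] distinct_card[OF xs'(1)] by simp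
      have "lam - {#?j#} \<in> partitions (card ?A')"
        using lam xs'(3) unfolding card_A' partitions_def
        by (auto dest: in_diffD simp: sum_mset.remove[OF xs'(3)])
      moreover have "card ?A' < ?N" using card_A' a fin card_gt_0_iff[of A] by (auto simp del: card_gt_0_iff)
      ultimately have IH: "card (B xs) * z_num (lam - {#?j#}) = fact (card ?A')"
        using less.hyps fin unfolding B_def by simp
      have "card (B xs) * z_num lam = ?j * count lam ?j * (card (B xs) * z_num (lam - {#?j#}))"
        unfolding z_num_remove[OF xs'(3)] by (simp only: mult_ac)
      thus ?thesis unfolding IH g_def card_A' .
    qed
    hence "card (perms_of_type A lam) * z_num lam = (\<Sum>xs\<in>Lx. g (Suc (length xs)))"
      unfolding card_eq sum_distrib_right by simp
    also have "\<dots> = (\<Sum>j\<in>set_mset lam. card {xs \<in> Lx. Suc (length xs) = j} * g j)"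
      by (subst sum.group[symmetric, OF \<open>finite Lx\<close>, where g = "\<lambda>xs. Suc (length xs)"])
        (auto simp: Lx_def)
    also have "\<dots> = (\<Sum>j\<in>set_mset lam. j * count lam j * fact (?N - 1))"
    proof (rule sum.cong[OF refl])
      fix j assume j: "j \<in> set_mset lam"
      hence "0 < j" "j \<le> ?N" using lam member_le_sum_mset[of j lam] by (auto simp: partitions_def)
      moreover have "{xs \<in> Lx. Suc (length xs) = j} = {xs. distinct (a # xs) \<and> set xs \<subseteq> A \<and> Suc (length xs) = j}"
        using j by (auto simp: Lx_def)
      ultimately have "card {xs \<in> Lx. Suc (length xs) = j} * fact (?N - j) = fact (?N - 1)"
        using card_cycle_lists_times_fact[OF fin a] by simp
      thus "card {xs \<in> Lx. Suc (length xs) = j} * g j = j * count lam j * fact (?N - 1)"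
        unfolding g_def by (metis mult.left_commute)
    qed
    also have "\<dots> = ?N * fact (?N - 1)"
      using sum_times_count_eq_sum_mset[of "set_mset lam" lam] lam
      by (simp add: sum_distrib_right[symmetric] partitions_def)
    also have "\<dots> = fact ?N" using False fin by (metis card_0_eq fact_num_eq_if of_nat_id)
    finally show ?thesis .
  qed
qed

lemma size_le_sum_mset: "\<forall>i\<in>#(M :: nat multiset). i > 0 \<Longrightarrow> size M \<le> sum_mset M"
  by (induction M) auto

lemma finite_partitions: "finite (partitions n)"
proof -
  have "partitions n \<subseteq> mset ` {xs. set xs \<subseteq> {1..n} \<and> length xs \<le> n}"
  proof
    fix lam assume "lam \<in> partitions n"
    hence pos: "\<forall>i\<in>#lam. i > 0" and sum: "sum_mset lam = n" unfolding partitions_def by auto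
    obtain xs where xs: "lam = mset xs" using ex_mset by metis
    have "set xs \<subseteq> {1..n}" using pos sum member_le_sum_mset xs by fastforce
    moreover have "length xs \<le> n" using size_le_sum_mset[OF pos] sum xs by simp
    ultimately show "lam \<in> mset ` {xs. set xs \<subseteq> {1..n} \<and> length xs \<le> n}" using xs by blast
  qed
  thus ?thesis using finite_lists_length_le[of "{1..n}" n] finite_surj by blast
qed

lemma sum_permutations_by_cycle_type:
  fixes h :: "nat multiset \<Rightarrow> real"
  shows "(\<Sum>\<sigma> | \<sigma> permutes {1..n}. h (cycle_type n \<sigma>)) =
         (\<Sum>lam\<in>partitions n. fact n / real (z_num lam) * h lam)"
proof -
  have "(\<Sum>\<sigma> | \<sigma> permutes {1..n}. h (cycle_type n \<sigma>)) =
        (\<Sum>lam\<in>partitions n. \<Sum>\<sigma> | \<sigma> \<in> {\<sigma>. \<sigma> permutes {1..n}} \<and> cycle_type n \<sigma> = lam. h (cycle_type n \<sigma>))"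
    using cycle_type_on_in_partitions[of _ "{1..n}"]
    by (intro sum.group[symmetric]) (auto simp: finite_permutations finite_partitions cycle_type_eq_cycle_type_on)
  also have "\<dots> = (\<Sum>lam\<in>partitions n. real (card (perms_of_type {1..n} lam)) * h lam)"
    by (intro sum.cong refl) (simp add: perms_of_type_def cycle_type_eq_cycle_type_on)
  also have "\<dots> = (\<Sum>lam\<in>partitions n. fact n / real (z_num lam) * h lam)"
  proof (intro sum.cong refl)
    fix lam assume lam: "lam \<in> partitions n"
    have "card (perms_of_type {1..n} lam) * z_num lam = fact n"
      using card_perms_of_type[of "{1..n}" lam] lam by simp
    hence "real (card (perms_of_type {1..n} lam)) * real (z_num lam) = fact n"
      by (metis of_nat_fact of_nat_mult)
    thus "real (card (perms_of_type {1..n} lam)) * h lam = fact n / real (z_num lam) * h lam"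
      using z_num_pos[OF lam] by (simp add: field_simps)
  qed
  finally show ?thesis .
qed

section \<open>Unrooted binary trees up to leaf-preserving isomorphism\<close>

lemma edge_subset_vertices:
  assumes "is_ubtree n G" "e \<in> snd G"
  shows "e \<subseteq> fst G"
  using assms unfolding is_ubtree_def by blast

text \<open>\<open>relabel\<close> renames every vertex, so besides permuting leaf labels it also serves to rename
  the internal vertices of a tree.\<close>

lemma deg_relabel:
  assumes inj: "inj_on h (fst G)" and edges: "\<forall>e\<in>snd G. e \<subseteq> fst G" and v: "v \<in> fst G"
  shows "deg (relabel h G) (h v) = deg G v"
proof -
  have inj_edges: "inj_on (\<lambda>e. h ` e) (snd G)"
    using inj_on_image_eq_iff[OF inj] edges by (intro inj_onI) blast
  have "{e' \<in> (\<lambda>e. h ` e) ` snd G. h v \<in> e'} = (\<lambda>e. h ` e) ` {e \<in> snd G. v \<in> e}"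
    using inj_on_image_mem_iff[OF inj] edges v by blast
  moreover have "inj_on (\<lambda>e. h ` e) {e \<in> snd G. v \<in> e}"
    using inj_edges by (rule inj_on_subset) auto
  ultimately show ?thesis unfolding deg_def relabel_def by (simp add: card_image)
qed

lemma connected_graph_relabel:
  assumes "connected_graph G"
  shows "connected_graph (relabel h G)"
  unfolding connected_graph_def
proof (intro ballI)
  fix u' v' assume "u' \<in> fst (relabel h G)" "v' \<in> fst (relabel h G)"
  then obtain u v where uv: "u \<in> fst G" "v \<in> fst G" "u' = h u" "v' = h v"
    by (auto simp: relabel_def)
  have "(u, v) \<in> {(x, y). {x, y} \<in> snd G}\<^sup>*" using assms uv unfolding connected_graph_def by blast
  hence "(h u, h v) \<in> {(x, y). {x, y} \<in> snd (relabel h G)}\<^sup>*"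
  proof (induction rule: rtrancl_induct)
    case (step y z)
    have "{h y, h z} \<in> snd (relabel h G)"
      using step(2) image_eqI[of "{h y, h z}" "\<lambda>e. h ` e" "{y, z}" "snd G"] by (simp add: relabel_def)
    thus ?case using step(3) by (simp add: rtrancl_into_rtrancl)
  qed simp
  thus "(u', v') \<in> {(x, y). {x, y} \<in> snd (relabel h G)}\<^sup>*" using uv by simp
qed

lemma is_ubtree_relabel:
  assumes G: "is_ubtree n G" and inj: "inj_on h (fst G)"
    and leaves: "\<forall>v\<in>fst G. h v \<in> {1..n} \<longleftrightarrow> v \<in> {1..n}"
    and cover: "{1..n} \<subseteq> h ` fst G"
  shows "is_ubtree n (relabel h G)"
proof -
  let ?V = "fst G" and ?E = "snd G"
  have edges: "?E \<subseteq> {e. \<exists>u v. e = {u, v} \<and> u \<noteq> v \<and> u \<in> ?V \<and> v \<in> ?V}"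
    and deg: "\<forall>v\<in>?V. (v \<in> {1..n} \<longrightarrow> deg G v = 1) \<and> (v \<notin> {1..n} \<longrightarrow> deg G v = 3)"
    and card_E: "card ?E + 1 = card ?V"
    using G unfolding is_ubtree_def by auto
  have edges_sub: "\<forall>e\<in>?E. e \<subseteq> ?V" using edges by blast
  have "card ((\<lambda>e. h ` e) ` ?E) = card ?E"
    using inj_on_image_eq_iff[OF inj] edges_sub by (intro card_image inj_onI) blast
  moreover have "card (h ` ?V) = card ?V" by (rule card_image[OF inj])
  ultimately have card: "card (snd (relabel h G)) + 1 = card (fst (relabel h G))"
    "card (fst (relabel h G)) = card ?V"
    using card_E by (simp_all add: relabel_def)
  have "snd (relabel h G) \<subseteq>
      {e. \<exists>u v. e = {u, v} \<and> u \<noteq> v \<and> u \<in> fst (relabel h G) \<and> v \<in> fst (relabel h G)}"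
  proof
    fix e' assume "e' \<in> snd (relabel h G)"
    then obtain u v where "e' = {h u, h v}" "u \<noteq> v" "u \<in> ?V" "v \<in> ?V"
      using edges by (auto simp: relabel_def)
    thus "e' \<in> {e. \<exists>u v. e = {u, v} \<and> u \<noteq> v \<and> u \<in> fst (relabel h G) \<and> v \<in> fst (relabel h G)}"
      using inj_onD[OF inj] by (auto simp: relabel_def)
  qed
  moreover have "\<forall>v\<in>fst (relabel h G). (v \<in> {1..n} \<longrightarrow> deg (relabel h G) v = 1) \<and>
      (v \<notin> {1..n} \<longrightarrow> deg (relabel h G) v = 3)"
    using deg deg_relabel[OF inj edges_sub] leaves by (auto simp: relabel_def)
  moreover have "finite (fst (relabel h G))" "{1..n} \<subseteq> fst (relabel h G)"
    using G cover by (simp_all add: is_ubtree_def relabel_def)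
  ultimately show ?thesis
    using G card connected_graph_relabel[of G h] unfolding is_ubtree_def by simp
qed

lemma relabel_ubtree:
  assumes "\<sigma> permutes {1..n}" "G \<in> ubtrees n"
  shows "relabel \<sigma> G \<in> ubtrees n"
proof -
  have G: "is_ubtree n G" using assms(2) by (simp add: ubtrees_def)
  have "{1..n} = \<sigma> ` {1..n}" using permutes_image[OF assms(1)] by simp
  also have "\<dots> \<subseteq> \<sigma> ` fst G" using G by (intro image_mono) (simp add: is_ubtree_def)
  finally have "is_ubtree n (relabel \<sigma> G)"
    using is_ubtree_relabel[OF G] permutes_inj[OF assms(1)] permutes_in_image[OF assms(1)]
    by (simp add: inj_on_subset)
  thus ?thesis by (simp add: ubtrees_def)
qed

lemma relabel_relabel: "relabel \<sigma> (relabel \<tau> G) = relabel (\<sigma> \<circ> \<tau>) G"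
  by (simp add: relabel_def image_comp)

lemma relabel_id [simp]: "relabel id G = G"
  by (simp add: relabel_def)

lemma leaf_iso_refl: "leaf_iso n G G"
  unfolding leaf_iso_def by (rule exI[of _ id]) simp

lemma leaf_iso_sym:
  assumes "is_ubtree n G" "leaf_iso n G H"
  shows "leaf_iso n H G"
proof -
  obtain f where f: "bij_betw f (fst G) (fst H)" "\<forall>i\<in>{1..n}. f i = i" "snd H = (\<lambda>e. f ` e) ` snd G"
    using assms(2) unfolding leaf_iso_def by blast
  let ?g = "inv_into (fst G) f"
  have inj: "inj_on f (fst G)" using f(1) bij_betw_def by blast
  have "bij_betw ?g (fst H) (fst G)" by (rule bij_betw_inv_into[OF f(1)])
  moreover have "\<forall>i\<in>{1..n}. ?g i = i"
    using inv_into_f_f[OF inj] f(2) assms(1) unfolding is_ubtree_def by fastforce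
  moreover have "snd G = (\<lambda>e. ?g ` e) ` snd H"
  proof -
    have "(\<lambda>e. ?g ` e) ` snd H = (\<lambda>e. ?g ` f ` e) ` snd G" unfolding f(3) by (simp add: image_comp)
    also have "\<dots> = snd G"
      using inv_into_image_cancel[OF inj edge_subset_vertices[OF assms(1)]] by simp
    finally show ?thesis by simp
  qed
  ultimately show ?thesis unfolding leaf_iso_def by blast
qed

lemma leaf_iso_trans:
  assumes "leaf_iso n G H" "leaf_iso n H K"
  shows "leaf_iso n G K"
proof -
  obtain f where f: "bij_betw f (fst G) (fst H)" "\<forall>i\<in>{1..n}. f i = i" "snd H = (\<lambda>e. f ` e) ` snd G"
    using assms(1) unfolding leaf_iso_def by blast
  obtain g where g: "bij_betw g (fst H) (fst K)" "\<forall>i\<in>{1..n}. g i = i" "snd K = (\<lambda>e. g ` e) ` snd H"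
    using assms(2) unfolding leaf_iso_def by blast
  have "bij_betw (g \<circ> f) (fst G) (fst K)" by (rule bij_betw_trans[OF f(1) g(1)])
  moreover have "\<forall>i\<in>{1..n}. (g \<circ> f) i = i" using f(2) g(2) by simp
  moreover have "snd K = (\<lambda>e. (g \<circ> f) ` e) ` snd G" unfolding g(3) f(3) by (simp add: image_comp)
  ultimately show ?thesis unfolding leaf_iso_def by blast
qed

lemma equiv_iso_rel: "equiv (ubtrees n) (iso_rel n)"
proof (rule equivI)
  show "refl_on (ubtrees n) (iso_rel n)"
    unfolding refl_on_def iso_rel_def using leaf_iso_refl by auto
  show "sym (iso_rel n)"
    unfolding sym_def iso_rel_def using leaf_iso_sym by (auto simp: ubtrees_def)
  show "trans (iso_rel n)"
    unfolding trans_def iso_rel_def using leaf_iso_trans by blast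
  show "iso_rel n \<subseteq> ubtrees n \<times> ubtrees n" unfolding iso_rel_def by auto
qed

lemma leaf_iso_relabel:
  assumes \<sigma>: "\<sigma> permutes {1..n}" and "leaf_iso n G H"
  shows "leaf_iso n (relabel \<sigma> G) (relabel \<sigma> H)"
proof -
  obtain f where f: "bij_betw f (fst G) (fst H)" "\<forall>i\<in>{1..n}. f i = i" "snd H = (\<lambda>e. f ` e) ` snd G"
    using assms(2) unfolding leaf_iso_def by blast
  let ?\<sigma>' = "Hilbert_Choice.inv \<sigma>"
  let ?f = "\<sigma> \<circ> f \<circ> ?\<sigma>'"
  have inv_bij: "bij_betw ?\<sigma>' (\<sigma> ` fst G) (fst G)"
    using permutes_inv_o(2)[OF \<sigma>] by (intro bij_betw_imageI inj_on_subset[OF permutes_inj[OF permutes_inv[OF \<sigma>]]])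
      (simp_all add: image_comp)
  have "bij_betw \<sigma> (fst H) (\<sigma> ` fst H)"
    using bij_betw_subset[OF permutes_bij[OF \<sigma>]] by blast
  hence "bij_betw ?f (\<sigma> ` fst G) (\<sigma> ` fst H)"
    using bij_betw_trans[OF bij_betw_trans[OF inv_bij f(1)]] by (simp add: comp_assoc)
  moreover have "\<forall>i\<in>{1..n}. ?f i = i"
    using f(2) permutes_inverses(1)[OF \<sigma>] permutes_in_image[OF permutes_inv[OF \<sigma>]] by simp
  moreover have "snd (relabel \<sigma> H) = (\<lambda>e. ?f ` e) ` snd (relabel \<sigma> G)"
    unfolding relabel_def f(3) by (simp add: image_comp permutes_inverses(2)[OF \<sigma>])
  ultimately show ?thesis unfolding leaf_iso_def relabel_def fst_conv by blast
qed

definition tree_class :: "nat \<Rightarrow> graph \<Rightarrow> graph set" where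
  "tree_class n G = iso_rel n `` {G}"

definition relabel_class :: "(nat \<Rightarrow> nat) \<Rightarrow> graph set \<Rightarrow> graph set" where
  "relabel_class \<sigma> C = relabel \<sigma> ` C"

lemma UT_eq_image_tree_class: "UT n = tree_class n ` ubtrees n"
  unfolding UT_def quotient_def tree_class_def by blast

lemma tree_class_eq_iff:
  "G \<in> ubtrees n \<Longrightarrow> H \<in> ubtrees n \<Longrightarrow> tree_class n G = tree_class n H \<longleftrightarrow> leaf_iso n G H"
  unfolding tree_class_def using eq_equiv_class_iff[OF equiv_iso_rel, of G n H]
  unfolding iso_rel_def by simp

lemma mem_tree_class: "H \<in> tree_class n G \<longleftrightarrow> G \<in> ubtrees n \<and> H \<in> ubtrees n \<and> leaf_iso n G H"
  unfolding tree_class_def iso_rel_def by simp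

lemma relabel_class_tree_class:
  assumes \<sigma>: "\<sigma> permutes {1..n}" and G: "G \<in> ubtrees n"
  shows "relabel_class \<sigma> (tree_class n G) = tree_class n (relabel \<sigma> G)"
  unfolding relabel_class_def
proof (intro equalityI subsetI)
  fix K assume "K \<in> relabel \<sigma> ` tree_class n G"
  then obtain H where "H \<in> ubtrees n" "leaf_iso n G H" "K = relabel \<sigma> H"
    by (auto simp: mem_tree_class)
  thus "K \<in> tree_class n (relabel \<sigma> G)"
    using relabel_ubtree[OF \<sigma>] leaf_iso_relabel[OF \<sigma>] G by (simp add: mem_tree_class)
next
  fix K assume "K \<in> tree_class n (relabel \<sigma> G)"
  hence K: "K \<in> ubtrees n" "leaf_iso n (relabel \<sigma> G) K" by (auto simp: mem_tree_class)
  let ?\<sigma>' = "Hilbert_Choice.inv \<sigma>"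
  have \<sigma>': "?\<sigma>' permutes {1..n}" by (rule permutes_inv[OF \<sigma>])
  have "relabel ?\<sigma>' (relabel \<sigma> G) = G" "relabel \<sigma> (relabel ?\<sigma>' K) = K"
    by (simp_all add: relabel_relabel permutes_inv_o[OF \<sigma>])
  hence "relabel ?\<sigma>' K \<in> tree_class n G" "K = relabel \<sigma> (relabel ?\<sigma>' K)"
    using G relabel_ubtree[OF \<sigma>' K(1)] leaf_iso_relabel[OF \<sigma>' K(2)] by (simp_all add: mem_tree_class)
  thus "K \<in> relabel \<sigma> ` tree_class n G" by blast
qed

lemma relabel_class_in_UT: "\<sigma> permutes {1..n} \<Longrightarrow> C \<in> UT n \<Longrightarrow> relabel_class \<sigma> C \<in> UT n"
  unfolding UT_eq_image_tree_class using relabel_class_tree_class relabel_ubtree by auto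

lemma relabel_class_relabel_class: "relabel_class \<sigma> (relabel_class \<tau> C) = relabel_class (\<sigma> \<circ> \<tau>) C"
  unfolding relabel_class_def by (simp add: image_comp relabel_relabel comp_def)

lemma relabel_class_id [simp]: "relabel_class id C = C"
  unfolding relabel_class_def by simp

lemma relabel_class_eq_tree_class_iff:
  assumes "\<sigma> permutes {1..n}" "G \<in> ubtrees n" "H \<in> ubtrees n"
  shows "relabel_class \<sigma> (tree_class n G) = tree_class n H \<longleftrightarrow> leaf_iso n (relabel \<sigma> G) H"
  unfolding relabel_class_tree_class[OF assms(1,2)]
  using tree_class_eq_iff[OF relabel_ubtree[OF assms(1,2)] assms(3)] .

definition fixed_classes :: "nat \<Rightarrow> (nat \<Rightarrow> nat) \<Rightarrow> graph set set" where
  "fixed_classes n \<sigma> = {C \<in> UT n. relabel_class \<sigma> C = C}"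

lemma fix_count_eq_card_fixed_classes:
  assumes \<sigma>: "\<sigma> permutes {1..n}"
  shows "fix_count n \<sigma> = card (fixed_classes n \<sigma>)"
proof -
  have "(\<forall>G\<in>C. relabel \<sigma> G \<in> C) \<longleftrightarrow> relabel_class \<sigma> C = C" if C: "C \<in> UT n" for C
  proof
    assume fixed: "\<forall>G\<in>C. relabel \<sigma> G \<in> C"
    obtain G where G: "G \<in> ubtrees n" "C = tree_class n G" using C UT_eq_image_tree_class by auto
    have "relabel \<sigma> G \<in> tree_class n G" using fixed G leaf_iso_refl by (simp add: mem_tree_class)
    hence "tree_class n (relabel \<sigma> G) = tree_class n G"
      using tree_class_eq_iff[OF relabel_ubtree[OF \<sigma> G(1)] G(1)] leaf_iso_sym
      by (auto simp: mem_tree_class ubtrees_def)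
    thus "relabel_class \<sigma> C = C" using relabel_class_tree_class[OF \<sigma> G(1)] G(2) by simp
  qed (auto simp: relabel_class_def)
  thus ?thesis unfolding fix_count_def fixed_classes_def by (metis (lifting) mem_Collect_eq)
qed

lemma sum_deg_eq_twice_card_edges:
  assumes "is_ubtree n G"
  shows "(\<Sum>v\<in>fst G. deg G v) = 2 * card (snd G)"
proof -
  let ?V = "fst G" and ?E = "snd G"
  have finite_V: "finite ?V" using assms unfolding is_ubtree_def by blast
  have edges: "?E \<subseteq> {e. \<exists>u v. e = {u, v} \<and> u \<noteq> v \<and> u \<in> ?V \<and> v \<in> ?V}"
    using assms unfolding is_ubtree_def by blast
  have finite_E: "finite ?E" using finite_subset[of ?E "Pow ?V"] edges finite_V by blast
  have "(\<Sum>v\<in>?V. deg G v) = (\<Sum>v\<in>?V. \<Sum>e\<in>?E. if v \<in> e then 1 else 0)"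
    unfolding deg_def using finite_E by (simp add: sum.inter_filter[symmetric])
  also have "\<dots> = (\<Sum>e\<in>?E. \<Sum>v\<in>?V. if v \<in> e then 1 else 0)" by (rule sum.swap)
  also have "\<dots> = (\<Sum>e\<in>?E. 2)"
  proof (rule sum.cong[OF refl])
    fix e assume "e \<in> ?E"
    then obtain u v where uv: "e = {u, v}" "u \<noteq> v" "u \<in> ?V" "v \<in> ?V" using edges by blast
    have "(\<Sum>x\<in>?V. if x \<in> e then 1 else 0) = card {x \<in> ?V. x \<in> e}"
      using finite_V by (simp add: sum.inter_filter[symmetric])
    also have "{x \<in> ?V. x \<in> e} = {u, v}" using uv by auto
    finally show "(\<Sum>x\<in>?V. if x \<in> e then 1 else 0) = (2::nat)" using uv by simp
  qed
  finally show ?thesis by simp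
qed

lemma card_internal_vertices:
  assumes "is_ubtree n G"
  shows "card (fst G - {1..n}) + 2 = n"
proof -
  let ?V = "fst G" and ?E = "snd G"
  have finite_V: "finite ?V" and two_le: "card ?V \<ge> 2" and card_E: "card ?E + 1 = card ?V" and leaves: "{1..n} \<subseteq> ?V"
    and deg_leaves: "\<forall>v\<in>?V. (v \<in> {1..n} \<longrightarrow> deg G v = 1) \<and> (v \<notin> {1..n} \<longrightarrow> deg G v = 3)"
    using assms unfolding is_ubtree_def by auto
  let ?m = "card (?V - {1..n})"
  have card_V: "card ?V = ?m + n" using card_Diff_subset[OF _ leaves] card_mono[OF finite_V leaves] by simp
  have "(\<Sum>v\<in>?V. deg G v) = (\<Sum>v\<in>?V - {1..n}. deg G v) + (\<Sum>v\<in>{1..n}. deg G v)"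
    by (rule sum.subset_diff[OF leaves finite_V])
  also have "(\<Sum>v\<in>?V - {1..n}. deg G v) = (\<Sum>v\<in>?V - {1..n}. 3)" using deg_leaves by (intro sum.cong) auto
  also have "(\<Sum>v\<in>{1..n}. deg G v) = (\<Sum>v\<in>{1..n}. 1)" using deg_leaves leaves by (intro sum.cong) auto
  finally have "3 * ?m + n = 2 * card ?E" using sum_deg_eq_twice_card_edges[OF assms] by simp
  thus ?thesis using card_E card_V two_le by linarith
qed

lemma leaf_iso_relabel_fixing_leaves:
  assumes "inj_on h (fst G)" "\<forall>i\<in>{1..n}. h i = i"
  shows "leaf_iso n G (relabel h G)"
  unfolding leaf_iso_def relabel_def using assms by (auto intro!: exI[of _ h] bij_betw_imageI)

lemma leaf_iso_to_small_vertex_set: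
  assumes G: "G \<in> ubtrees n"
  obtains H where "H \<in> ubtrees n" "fst H \<subseteq> {1..2*n}" "leaf_iso n G H"
proof -
  have ub: "is_ubtree n G" using G by (simp add: ubtrees_def)
  let ?V = "fst G" and ?I = "fst G - {1..n}"
  let ?J = "{n+1..n + card ?I}"
  have fin: "finite ?V" and leaves: "{1..n} \<subseteq> ?V" using ub unfolding is_ubtree_def by auto
  obtain g where g: "bij_betw g ?I ?J" using finite_same_card_bij[of ?I ?J] fin by auto
  define h where "h x = (if x \<in> {1..n} then x else g x)" for x
  have g_internal: "g x \<in> ?J" if "x \<in> ?I" for x using that bij_betwE[OF g] by blast
  have inj: "inj_on h ?V"
  proof (rule inj_onI)
    fix x y assume "x \<in> ?V" "y \<in> ?V" "h x = h y"
    thus "x = y"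
      using g_internal[of x] g_internal[of y] inj_onD[OF bij_betw_imp_inj_on[OF g], of x y]
      by (cases "x \<in> {1..n}"; cases "y \<in> {1..n}") (auto simp: h_def)
  qed
  moreover have "\<forall>v\<in>?V. h v \<in> {1..n} \<longleftrightarrow> v \<in> {1..n}"
  proof
    fix v assume "v \<in> ?V"
    thus "h v \<in> {1..n} \<longleftrightarrow> v \<in> {1..n}" using g_internal[of v] by (auto simp: h_def)
  qed
  moreover have "{1..n} \<subseteq> h ` ?V" using leaves by (force simp: h_def)
  ultimately have "relabel h G \<in> ubtrees n" using is_ubtree_relabel[OF ub] by (simp add: ubtrees_def)
  moreover have "fst (relabel h G) \<subseteq> {1..2*n}"
  proof -
    have "h v \<in> {1..2*n}" if "v \<in> ?V" for v
      using g_internal[of v] that card_internal_vertices[OF ub] by (auto simp: h_def)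
    thus ?thesis by (auto simp: relabel_def)
  qed
  moreover have "leaf_iso n G (relabel h G)"
    using leaf_iso_relabel_fixing_leaves[OF inj] by (simp add: h_def)
  ultimately show thesis using that by blast
qed

lemma finite_UT: "finite (UT n)"
proof -
  let ?S = "{H \<in> ubtrees n. fst H \<subseteq> {1..2*n}}"
  have "?S \<subseteq> Pow {1..2*n} \<times> Pow (Pow {1..2*n})"
  proof
    fix H assume H: "H \<in> ?S"
    hence "snd H \<subseteq> Pow (fst H)" using edge_subset_vertices[of n H] by (auto simp: ubtrees_def)
    thus "H \<in> Pow {1..2*n} \<times> Pow (Pow {1..2*n})" using H by (cases H) auto
  qed
  hence fS: "finite ?S" by (rule finite_subset) simp
  have "UT n \<subseteq> tree_class n ` ?S"
  proof
    fix C assume "C \<in> UT n"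
    then obtain G where G: "G \<in> ubtrees n" "C = tree_class n G" using UT_eq_image_tree_class by auto
    obtain H where H: "H \<in> ubtrees n" "fst H \<subseteq> {1..2*n}" "leaf_iso n G H"
      using leaf_iso_to_small_vertex_set[OF G(1)] .
    have "C = tree_class n H" using G tree_class_eq_iff[OF G(1) H(1)] H(3) by simp
    thus "C \<in> tree_class n ` ?S" using H by blast
  qed
  thus ?thesis using fS finite_surj by blast
qed

section \<open>Trees fixed by a relabelling\<close>

lemma fix_count_conjugate:
  assumes \<sigma>: "\<sigma> permutes {1..n}" and \<tau>: "\<tau> permutes {1..n}" and \<pi>: "\<pi> permutes {1..n}"
    and conj: "\<tau> \<circ> \<pi> = \<pi> \<circ> \<sigma>"
  shows "fix_count n \<sigma> = fix_count n \<tau>"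
proof -
  let ?\<pi>' = "Hilbert_Choice.inv \<pi>"
  have \<pi>': "?\<pi>' permutes {1..n}" by (rule permutes_inv[OF \<pi>])
  have inv: "?\<pi>' \<circ> \<pi> = id" "\<pi> \<circ> ?\<pi>' = id" using permutes_inv_o[OF \<pi>] by auto
  have conj': "\<sigma> \<circ> ?\<pi>' = ?\<pi>' \<circ> \<tau>"
    by (metis (no_types, lifting) conj inv comp_assoc comp_id id_comp)
  have maps: "relabel_class \<rho> ` fixed_classes n \<alpha> \<subseteq> fixed_classes n \<beta>"
    if \<rho>: "\<rho> permutes {1..n}" and intertwines: "\<beta> \<circ> \<rho> = \<rho> \<circ> \<alpha>" for \<rho> \<alpha> \<beta>
  proof
    fix D assume "D \<in> relabel_class \<rho> ` fixed_classes n \<alpha>"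
    then obtain C where C: "C \<in> UT n" "relabel_class \<alpha> C = C" "D = relabel_class \<rho> C"
      unfolding fixed_classes_def by blast
    have "relabel_class \<beta> D = relabel_class \<rho> (relabel_class \<alpha> C)"
      unfolding C(3) relabel_class_relabel_class intertwines ..
    thus "D \<in> fixed_classes n \<beta>" using C relabel_class_in_UT[OF \<rho>] unfolding fixed_classes_def by simp
  qed
  have "bij_betw (relabel_class \<pi>) (fixed_classes n \<sigma>) (fixed_classes n \<tau>)"
    by (rule bij_betw_byWitness[where f' = "relabel_class ?\<pi>'"])
      (use maps[OF \<pi> conj] maps[OF \<pi>' conj'] in \<open>simp_all add: relabel_class_relabel_class inv\<close>)
  thus ?thesis
    using bij_betw_same_card fix_count_eq_card_fixed_classes[OF \<sigma>] fix_count_eq_card_fixed_classes[OF \<tau>]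
    by metis
qed

lemma perm_of_type_cycle_type:
  assumes "\<sigma> permutes {1..n}"
  shows "perm_of_type n (cycle_type n \<sigma>) permutes {1..n}"
    and "cycle_type n (perm_of_type n (cycle_type n \<sigma>)) = cycle_type n \<sigma>"
  using someI[of "\<lambda>\<tau>. \<tau> permutes {1..n} \<and> cycle_type n \<tau> = cycle_type n \<sigma>", OF conjI[OF assms refl]]
  unfolding perm_of_type_def by simp_all

lemma conjugate_perm_of_type:
  assumes \<sigma>: "\<sigma> permutes {1..n}"
  obtains \<pi> where "\<pi> permutes {1..n}" "perm_of_type n (cycle_type n \<sigma>) \<circ> \<pi> = \<pi> \<circ> \<sigma>"
  using conjugate_if_cycle_type_on_eq[OF \<sigma> perm_of_type_cycle_type(1)[OF \<sigma>]]
    perm_of_type_cycle_type(2)[OF \<sigma>] by (auto simp: cycle_type_eq_cycle_type_on)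

lemma u_num_cycle_type:
  assumes \<sigma>: "\<sigma> permutes {1..n}"
  shows "u_num n (cycle_type n \<sigma>) = fix_count n \<sigma>"
  using conjugate_perm_of_type[OF \<sigma>] fix_count_conjugate[OF \<sigma> perm_of_type_cycle_type(1)[OF \<sigma>]]
  unfolding u_num_def by metis

lemma u_num_sq_type:
  assumes \<sigma>: "\<sigma> permutes {1..n}"
  shows "u_num n (sq_type n (cycle_type n \<sigma>)) = fix_count n (\<sigma> \<circ> \<sigma>)"
proof -
  let ?\<tau> = "perm_of_type n (cycle_type n \<sigma>)"
  have \<tau>\<tau>: "?\<tau> \<circ> ?\<tau> permutes {1..n}"
    using permutes_compose perm_of_type_cycle_type(1)[OF \<sigma>] by blast
  obtain \<pi> where \<pi>: "\<pi> permutes {1..n}" "?\<tau> \<circ> \<pi> = \<pi> \<circ> \<sigma>"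
    using conjugate_perm_of_type[OF \<sigma>] .
  have "(?\<tau> \<circ> ?\<tau>) \<circ> \<pi> = \<pi> \<circ> (\<sigma> \<circ> \<sigma>)" using \<pi>(2) by (metis comp_assoc)
  hence "fix_count n (\<sigma> \<circ> \<sigma>) = fix_count n (?\<tau> \<circ> ?\<tau>)"
    using fix_count_conjugate[OF permutes_compose[OF \<sigma> \<sigma>] \<tau>\<tau> \<pi>(1)] by simp
  thus ?thesis unfolding sq_type_def u_num_cycle_type[OF \<tau>\<tau>] by simp
qed

section \<open>Burnside's lemma and the count of tanglegrams\<close>

lemma group_action_restrict:
  fixes G :: "('g, 'm) monoid_scheme" and \<psi> :: "'g \<Rightarrow> 'x \<Rightarrow> 'x"
  assumes is_group: "group G" and closed: "\<And>g x. g \<in> carrier G \<Longrightarrow> x \<in> E \<Longrightarrow> \<psi> g x \<in> E"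
    and mult: "\<And>g h x. g \<in> carrier G \<Longrightarrow> h \<in> carrier G \<Longrightarrow> x \<in> E \<Longrightarrow> \<psi> (g \<otimes>\<^bsub>G\<^esub> h) x = \<psi> g (\<psi> h x)"
    and one: "\<And>x. x \<in> E \<Longrightarrow> \<psi> \<one>\<^bsub>G\<^esub> x = x"
  shows "group_action G E (\<lambda>g. restrict (\<psi> g) E)"
proof -
  have bij: "restrict (\<psi> g) E \<in> Bij E" if g: "g \<in> carrier G" for g
  proof -
    have ig: "inv\<^bsub>G\<^esub> g \<in> carrier G" using group.inv_closed[OF is_group g] .
    have "bij_betw (\<psi> g) E E"
    proof (rule bij_betw_byWitness[where f' = "\<psi> (inv\<^bsub>G\<^esub> g)"])
      show "\<forall>a\<in>E. \<psi> (inv\<^bsub>G\<^esub> g) (\<psi> g a) = a"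
        using mult[OF ig g] one group.l_inv[OF is_group g] by metis
      show "\<forall>a\<in>E. \<psi> g (\<psi> (inv\<^bsub>G\<^esub> g) a) = a"
        using mult[OF g ig] one group.r_inv[OF is_group g] by metis
      show "\<psi> g ` E \<subseteq> E" using closed[OF g] by blast
      show "\<psi> (inv\<^bsub>G\<^esub> g) ` E \<subseteq> E" using closed[OF ig] by blast
    qed
    hence "bij_betw (restrict (\<psi> g) E) E E" by (rule iffD1[OF bij_betw_cong, rotated]) simp
    thus ?thesis unfolding Bij_def by simp
  qed
  have hom: "(\<lambda>g. restrict (\<psi> g) E) \<in> hom G (BijGroup E)"
  proof (rule homI)
    fix g assume "g \<in> carrier G"
    thus "restrict (\<psi> g) E \<in> carrier (BijGroup E)" using bij by (simp add: BijGroup_def)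
  next
    fix g h assume g: "g \<in> carrier G" and h: "h \<in> carrier G"
    have "restrict (\<psi> g) E \<otimes>\<^bsub>BijGroup E\<^esub> restrict (\<psi> h) E = compose E (restrict (\<psi> g) E) (restrict (\<psi> h) E)"
      using bij[OF g] bij[OF h] by (simp add: BijGroup_def)
    also have "\<dots> = restrict (\<psi> (g \<otimes>\<^bsub>G\<^esub> h)) E"
      unfolding compose_def using closed[OF h] mult[OF g h] by (intro restrict_ext) simp
    finally show "restrict (\<psi> (g \<otimes>\<^bsub>G\<^esub> h)) E = restrict (\<psi> g) E \<otimes>\<^bsub>BijGroup E\<^esub> restrict (\<psi> h) E" by simp
  qed
  show ?thesis unfolding group_action_def group_hom_def group_hom_axioms_def
    using is_group group_BijGroup hom by blast
qed

lemma burnside_card_orbits: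
  fixes G :: "('g, 'm) monoid_scheme" and \<psi> :: "'g \<Rightarrow> 'x \<Rightarrow> 'x"
  assumes is_group: "group G" and closed: "\<And>g x. g \<in> carrier G \<Longrightarrow> x \<in> E \<Longrightarrow> \<psi> g x \<in> E"
    and mult: "\<And>g h x. g \<in> carrier G \<Longrightarrow> h \<in> carrier G \<Longrightarrow> x \<in> E \<Longrightarrow> \<psi> (g \<otimes>\<^bsub>G\<^esub> h) x = \<psi> g (\<psi> h x)"
    and one: "\<And>x. x \<in> E \<Longrightarrow> \<psi> \<one>\<^bsub>G\<^esub> x = x"
    and finite_G: "finite (carrier G)" and finite_E: "finite E"
  shows "card (E // {(x, y). x \<in> E \<and> (\<exists>g\<in>carrier G. \<psi> g x = y)}) * order G
         = (\<Sum>g\<in>carrier G. card {x \<in> E. \<psi> g x = x})"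
proof -
  let ?phi = "\<lambda>g. restrict (\<psi> g) E"
  let ?S = "{(x, y). x \<in> E \<and> (\<exists>g\<in>carrier G. \<psi> g x = y)}"
  have ga: "group_action G E ?phi" by (rule group_action_restrict[OF is_group closed mult one])
  have "orbits G E ?phi = E // ?S"
    unfolding orbits_def orbit_def quotient_def by auto
  moreover have "invariants E ?phi g = {x \<in> E. \<psi> g x = x}" for g
    unfolding invariants_def by auto
  ultimately show ?thesis using group_action.burnside[OF ga finite_G finite_E] by simp
qed

lemma card_quotient_eq_if_image:
  assumes q: "q ` A = B" and R: "R \<subseteq> A \<times> A" and S: "S \<subseteq> B \<times> B"
    and rel: "\<And>x y. x \<in> A \<Longrightarrow> y \<in> A \<Longrightarrow> (x, y) \<in> R \<longleftrightarrow> (q x, q y) \<in> S"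
  shows "card (A // R) = card (B // S)"
proof -
  let ?f = "\<lambda>X. {x \<in> A. q x \<in> X}"
  have img: "?f (S `` {q x0}) = R `` {x0}" if x0: "x0 \<in> A" for x0
    using rel[OF x0] R by auto
  have "bij_betw ?f (B // S) (A // R)"
    unfolding bij_betw_def
  proof
    show "inj_on ?f (B // S)"
    proof (rule inj_onI)
      fix X Y assume X: "X \<in> B // S" and Y: "Y \<in> B // S" and e: "?f X = ?f Y"
      have "X \<subseteq> B" "Y \<subseteq> B" using X Y S unfolding quotient_def by auto
      hence "X = q ` ?f X" "Y = q ` ?f Y" using q by auto
      thus "X = Y" using e by simp
    qed
    show "?f ` (B // S) = A // R"
    proof
      show "?f ` (B // S) \<subseteq> A // R"
      proof
        fix Z assume "Z \<in> ?f ` (B // S)"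
        then obtain b where b: "b \<in> B" "Z = ?f (S `` {b})" unfolding quotient_def by auto
        then obtain x0 where x0: "x0 \<in> A" "b = q x0" using q by auto
        have "Z = R `` {x0}" using img[OF x0(1)] b(2) x0(2) by simp
        thus "Z \<in> A // R" using quotientI[OF x0(1)] by simp
      qed
      show "A // R \<subseteq> ?f ` (B // S)"
      proof
        fix Z assume "Z \<in> A // R"
        then obtain x0 where x0: "x0 \<in> A" "Z = R `` {x0}" unfolding quotient_def by auto
        have qx: "q x0 \<in> B" using x0 q by auto
        have m: "S `` {q x0} \<in> B // S" using quotientI[OF qx] .
        have "Z = ?f (S `` {q x0})" using img[OF x0(1)] x0(2) by simp
        thus "Z \<in> ?f ` (B // S)" by (rule rev_image_eqI[OF m])
      qed
    qed
  qed
  thus ?thesis by (rule bij_betw_same_card[symmetric])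
qed

lemma burnside_card_quotient:
  fixes G :: "('g, 'm) monoid_scheme" and \<psi> :: "'g \<Rightarrow> 'x \<Rightarrow> 'x"
  assumes is_group: "group G" and closed: "\<And>g x. g \<in> carrier G \<Longrightarrow> x \<in> E \<Longrightarrow> \<psi> g x \<in> E"
    and mult: "\<And>g h x. g \<in> carrier G \<Longrightarrow> h \<in> carrier G \<Longrightarrow> x \<in> E \<Longrightarrow> \<psi> (g \<otimes>\<^bsub>G\<^esub> h) x = \<psi> g (\<psi> h x)"
    and one: "\<And>x. x \<in> E \<Longrightarrow> \<psi> \<one>\<^bsub>G\<^esub> x = x"
    and finite_G: "finite (carrier G)" and finite_E: "finite E"
    and q: "q ` A = E" and R: "R \<subseteq> A \<times> A"
    and rel: "\<And>x y. x \<in> A \<Longrightarrow> y \<in> A \<Longrightarrow> (x, y) \<in> R \<longleftrightarrow> (\<exists>g\<in>carrier G. \<psi> g (q x) = q y)"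
  shows "card (A // R) * order G = (\<Sum>g\<in>carrier G. card {x \<in> E. \<psi> g x = x})"
proof -
  have "card (A // R) = card (E // {(x, y). x \<in> E \<and> (\<exists>g\<in>carrier G. \<psi> g x = y)})"
    using q R closed by (intro card_quotient_eq_if_image) (auto simp: rel)
  thus ?thesis using burnside_card_orbits[OF is_group closed mult one finite_G finite_E] by simp
qed

lemma order_sym_group: "order (sym_group n) = fact n"
  unfolding order_def sym_group_def using card_permutations[of "{1..n}" n] by simp

lemma image_tree_class_pairs:
  "(\<lambda>(G, H). (tree_class n G, tree_class n H)) ` (ubtrees n \<times> ubtrees n) = UT n \<times> UT n"
  unfolding UT_eq_image_tree_class by force

lemma card_fixed_pairs:
  assumes \<sigma>: "\<sigma> permutes {1..n}"
  shows "card {x \<in> UT n \<times> UT n. (relabel_class \<sigma> (fst x), relabel_class \<sigma> (snd x)) = x}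
    = fix_count n \<sigma> ^ 2"
proof -
  have "{x \<in> UT n \<times> UT n. (relabel_class \<sigma> (fst x), relabel_class \<sigma> (snd x)) = x}
      = fixed_classes n \<sigma> \<times> fixed_classes n \<sigma>"
    by (auto simp: fixed_classes_def)
  thus ?thesis
    using fix_count_eq_card_fixed_classes[OF \<sigma>] by (simp add: card_cartesian_product power2_eq_square)
qed

lemma card_swap_fixed_pairs:
  assumes \<sigma>: "\<sigma> permutes {1..n}"
  shows "card {x \<in> UT n \<times> UT n. (relabel_class \<sigma> (snd x), relabel_class \<sigma> (fst x)) = x}
    = fix_count n (\<sigma> \<circ> \<sigma>)"
proof -
  have "{x \<in> UT n \<times> UT n. (relabel_class \<sigma> (snd x), relabel_class \<sigma> (fst x)) = x}
      = (\<lambda>C. (C, relabel_class \<sigma> C)) ` fixed_classes n (\<sigma> \<circ> \<sigma>)"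
    using relabel_class_in_UT[OF \<sigma>]
    by (auto simp: fixed_classes_def relabel_class_relabel_class[symmetric] image_iff)
  moreover have "inj_on (\<lambda>C. (C, relabel_class \<sigma> C)) (fixed_classes n (\<sigma> \<circ> \<sigma>))"
    by (auto simp: inj_on_def)
  ultimately show ?thesis
    using fix_count_eq_card_fixed_classes[OF permutes_compose[OF \<sigma> \<sigma>]] by (simp add: card_image)
qed

lemma num_tanglegrams_burnside:
  "num_tanglegrams n * fact n = (\<Sum>\<sigma> | \<sigma> permutes {1..n}. fix_count n \<sigma> ^ 2)"
proof -
  let ?\<psi> = "\<lambda>\<sigma> x. (relabel_class \<sigma> (fst x), relabel_class \<sigma> (snd x))"
  let ?q = "\<lambda>(G, H). (tree_class n G, tree_class n H)"
  have "num_tanglegrams n * order (sym_group n)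
      = (\<Sum>\<sigma>\<in>carrier (sym_group n). card {x \<in> UT n \<times> UT n. ?\<psi> \<sigma> x = x})"
    unfolding num_tanglegrams_def
  proof (rule burnside_card_quotient[OF sym_group_is_group _ _ _ _ _ image_tree_class_pairs])
    fix x y assume "x \<in> ubtrees n \<times> ubtrees n" "y \<in> ubtrees n \<times> ubtrees n"
    then obtain G1 G2 H1 H2 where xy: "x = (G1, G2)" "y = (H1, H2)"
      and G: "G1 \<in> ubtrees n" "G2 \<in> ubtrees n" "H1 \<in> ubtrees n" "H2 \<in> ubtrees n" by auto
    note iff = relabel_class_eq_tree_class_iff[OF _ G(1,3)] relabel_class_eq_tree_class_iff[OF _ G(2,4)]
    show "(x, y) \<in> tangle_rel n \<longleftrightarrow> (\<exists>\<sigma>\<in>carrier (sym_group n). ?\<psi> \<sigma> (?q x) = ?q y)"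
      unfolding xy using G by (simp add: tangle_rel_def sym_group_carrier Bex_def iff cong: conj_cong)
  qed (auto simp: tangle_rel_def sym_group_carrier sym_group_mult sym_group_one relabel_class_in_UT
      relabel_class_relabel_class finite_UT finite_permutations sym_group_def)
  also have "\<dots> = (\<Sum>\<sigma> | \<sigma> permutes {1..n}. fix_count n \<sigma> ^ 2)"
    by (intro sum.cong) (simp_all add: sym_group_def card_fixed_pairs)
  finally show ?thesis unfolding order_sym_group .
qed

definition swap_group :: "bool monoid" where
  "swap_group = \<lparr>carrier = UNIV, mult = (\<noteq>), one = False\<rparr>"

lemma swap_group_is_group: "group swap_group"
  by (rule groupI) (auto simp: swap_group_def)

lemma num_unordered_tanglegrams_burnside:
  "num_unordered_tanglegrams n * (2 * fact n) =
     (\<Sum>\<sigma> | \<sigma> permutes {1..n}. fix_count n \<sigma> ^ 2) + (\<Sum>\<sigma> | \<sigma> permutes {1..n}. fix_count n (\<sigma> \<circ> \<sigma>))"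
proof -
  let ?G = "sym_group n \<times>\<times> swap_group"
  let ?\<psi> = "\<lambda>(\<sigma>, swap) x. if swap then (relabel_class \<sigma> (snd x), relabel_class \<sigma> (fst x))
      else (relabel_class \<sigma> (fst x), relabel_class \<sigma> (snd x))"
  let ?q = "\<lambda>(G, H). (tree_class n G, tree_class n H)"
  have carrier: "carrier ?G = {\<sigma>. \<sigma> permutes {1..n}} \<times> UNIV"
    by (simp add: sym_group_def swap_group_def)
  have "num_unordered_tanglegrams n * order ?G
      = (\<Sum>g\<in>carrier ?G. card {x \<in> UT n \<times> UT n. ?\<psi> g x = x})"
    unfolding num_unordered_tanglegrams_def
  proof (rule burnside_card_quotient[OF DirProd_group[OF sym_group_is_group swap_group_is_group]
        _ _ _ _ _ image_tree_class_pairs])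
    fix x y assume "x \<in> ubtrees n \<times> ubtrees n" "y \<in> ubtrees n \<times> ubtrees n"
    then obtain G1 G2 H1 H2 where xy: "x = (G1, G2)" "y = (H1, H2)"
      and G: "G1 \<in> ubtrees n" "G2 \<in> ubtrees n" "H1 \<in> ubtrees n" "H2 \<in> ubtrees n" by auto
    note iff = relabel_class_eq_tree_class_iff[OF _ G(1,3)] relabel_class_eq_tree_class_iff[OF _ G(2,4)]
      relabel_class_eq_tree_class_iff[OF _ G(1,4)] relabel_class_eq_tree_class_iff[OF _ G(2,3)]
    have "(\<exists>g\<in>carrier ?G. ?\<psi> g (?q x) = ?q y) \<longleftrightarrow>
        (\<exists>\<sigma>. \<sigma> permutes {1..n} \<and> (?\<psi> (\<sigma>, False) (?q x) = ?q y \<or> ?\<psi> (\<sigma>, True) (?q x) = ?q y))"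
      unfolding carrier by (auto simp: Bex_def)
    thus "(x, y) \<in> unordered_tangle_rel n \<longleftrightarrow> (\<exists>g\<in>carrier ?G. ?\<psi> g (?q x) = ?q y)"
      unfolding xy using G by (simp add: unordered_tangle_rel_def iff cong: conj_cong) blast
  qed (auto simp: unordered_tangle_rel_def carrier relabel_class_in_UT relabel_class_relabel_class
      finite_UT finite_permutations sym_group_def swap_group_def)
  also have "\<dots> = (\<Sum>\<sigma> | \<sigma> permutes {1..n}. \<Sum>swap\<in>UNIV. card {x \<in> UT n \<times> UT n. ?\<psi> (\<sigma>, swap) x = x})"
    unfolding carrier by (subst sum.cartesian_product) (simp add: case_prod_unfold)
  also have "\<dots> = (\<Sum>\<sigma> | \<sigma> permutes {1..n}. fix_count n \<sigma> ^ 2 + fix_count n (\<sigma> \<circ> \<sigma>))"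
    by (intro sum.cong) (simp_all add: UNIV_bool card_fixed_pairs card_swap_fixed_pairs)
  moreover have "order ?G = 2 * fact n"
    unfolding order_def carrier using card_permutations[of "{1..n}" n] by (simp add: card_cartesian_product)
  ultimately show ?thesis by (simp add: sum.distrib)
qed

lemma sum_fix_count_sq:
  "(\<Sum>\<sigma> | \<sigma> permutes {1..n}. real (fix_count n \<sigma>) ^ 2)
    = fact n * (\<Sum>lam\<in>partitions n. real (u_num n lam) ^ 2 / real (z_num lam))"
proof -
  have "(\<Sum>\<sigma> | \<sigma> permutes {1..n}. real (fix_count n \<sigma>) ^ 2)
      = (\<Sum>\<sigma> | \<sigma> permutes {1..n}. real (u_num n (cycle_type n \<sigma>)) ^ 2)"
    by (intro sum.cong) (simp_all add: u_num_cycle_type)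
  thus ?thesis
    using sum_permutations_by_cycle_type[of "\<lambda>lam. real (u_num n lam) ^ 2"] by (simp add: sum_distrib_left)
qed

lemma sum_fix_count_comp_self:
  "(\<Sum>\<sigma> | \<sigma> permutes {1..n}. real (fix_count n (\<sigma> \<circ> \<sigma>)))
    = fact n * (\<Sum>lam\<in>partitions n. real (u_num n (sq_type n lam)) / real (z_num lam))"
proof -
  have "(\<Sum>\<sigma> | \<sigma> permutes {1..n}. real (fix_count n (\<sigma> \<circ> \<sigma>)))
      = (\<Sum>\<sigma> | \<sigma> permutes {1..n}. real (u_num n (sq_type n (cycle_type n \<sigma>))))"
    by (intro sum.cong) (simp_all add: u_num_sq_type)
  thus ?thesis
    using sum_permutations_by_cycle_type[of "\<lambda>lam. real (u_num n (sq_type n lam))"]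
    by (simp add: sum_distrib_left)
qed

theorem mainTheorem2:
  fixes n :: nat
  assumes "n \<ge> 2"
  shows "real (num_tanglegrams n) =
           (\<Sum>lam\<in>partitions n. real (u_num n lam) ^ 2 / real (z_num lam))
       \<and> real (num_unordered_tanglegrams n) =
           (1/2) * (\<Sum>lam\<in>partitions n. real (u_num n lam) ^ 2 / real (z_num lam))
         + (1/2) * (\<Sum>lam\<in>partitions n. real (u_num n (sq_type n lam)) / real (z_num lam))"
proof -
  let ?A = "\<Sum>lam\<in>partitions n. real (u_num n lam) ^ 2 / real (z_num lam)"
  let ?B = "\<Sum>lam\<in>partitions n. real (u_num n (sq_type n lam)) / real (z_num lam)"
  have "fact n * real (num_tanglegrams n) = fact n * ?A"
    using arg_cong[OF num_tanglegrams_burnside[of n], of real] sum_fix_count_sq[of n]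
    by (simp add: mult.commute)
  moreover have "fact n * (2 * real (num_unordered_tanglegrams n)) = fact n * (?A + ?B)"
    using arg_cong[OF num_unordered_tanglegrams_burnside[of n], of real]
      sum_fix_count_sq[of n] sum_fix_count_comp_self[of n]
    by (simp add: algebra_simps)
  ultimately show ?thesis by simp
qed

end
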